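(* Let $\{x^k\}$ be generated by the ABP algorithm described in the context and assume (A1)–(A6), (A7'), (A8): (A1) $\mathcal F$ is continuously differentiable; (A2) $C$, $Q$ nonempty closed convex, $z_i^*>-\infty$ for each $i$; (A3) each $f_i$ convex; (A4) $\Omega\ne\emptyset$; (A5) $\lambda_k>0$, $\sum\lambda_k=\infty$, $\sum\lambda_k^2<\infty$; (A6) $0<\underline\alpha\le\alpha_k\le\bar\alpha$, $0<\underline\beta\le\beta_k\le\bar\beta$, $0<\underline\gamma\le\gamma_k\le\bar\gamma$ for all $k$; (A7') $\sigma:=\varphi^*-\varphi_{\mathrm{lb}}\le\varepsilon_0$ for a known constant $\varepsilon_0\ge0$; (A8) $\sup_k\|x^k\|\le B<\infty$. Then for every $x^*\in\Omega$ and all $k\ge0$, $$\|x^{k+1}-x^*\|^2\le\|x^k-x^*\|^2-\frac{2\lambda_k}{\eta_k}\Phi_k+\frac{2\bar\alpha\sigma}{\mu}\lambda_k+\lambda_k^2.$$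
   Context: Let $n,m\ge1$, $\mathcal F=(f_1,\dots,f_m)\colon\mathbb R^n\to\mathbb R^m$, $C\subset\mathbb R^n$, $Q\subset\mathbb R^m$, $Q^+:=Q-\mathbb R^m_+=\{y-u:y\in Q,u\in\mathbb R^m_+\}$; $P_S$ is Euclidean projection onto a nonempty closed convex set $S$. Let $z_i^*:=\inf_{x\in C}f_i(x)$, fix $r$ with $r_i>0$, $\sum r_i=1$. Define $\varphi(x):=\max_ir_i(f_i(x)-z_i^* )$, $H(x):=\tfrac12\mathrm{dist}^2(x,C)$, $G(x):=\tfrac12\mathrm{dist}^2(\mathcal F(x),Q^+)$, $\mathcal S:=\{x:H(x)=0,G(x)=0\}$, $\varphi^*:=\inf_{\mathcal S}\varphi$, $\Omega:=\{x\in\mathcal S:\varphi(x)=\varphi^*\}$, $\varphi_{\mathrm{lb}}:=\inf_C\varphi$. ABP algorithm: given $x^0$, $\mu>0$, positive sequences $\{\alpha_k\},\{\beta_k\},\{\gamma_k\},\{\lambda_k\}$: $p^k:=P_{Q^+}(\mathcal F(x^k))$, $\rho^k:=\mathcal F(x^k)-p^k$, $z^k:=x^k-P_C(x^k)$, $v^k:=J_{\mathcal F}(x^k)^T\rho^k$, $w^k:=r_{i^*}\nabla f_{i^*}(x^k)$ with arbitrary $i^*\in\arg\max_ir_i(f_i(x^k)-z_i^* )$, $\Delta_k:=\varphi(x^k)-\varphi_{\mathrm{lb}}$, $d^k:=\alpha_k\mathbf 1_{\{\Delta_k\ge0\}}w^k+\beta_kz^k+\gamma_kv^k$, $\eta_k:=\max(\mu,\|d^k\|)$,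 $x^{k+1}:=x^k-(\lambda_k/\eta_k)d^k$. Notation: $H_k:=H(x^k)$, $G_k:=G(x^k)$, $\Delta_k^+:=\max(\Delta_k,0)$, $\Phi_k:=\alpha_k\Delta_k^++\beta_kH_k+\gamma_kG_k$. *)

theory Defs
  imports "HOL-Analysis.Analysis"
begin

definition Qplus :: "(real^'m) set \<Rightarrow> (real^'m) set" where
  "Qplus Q = {y - u | y u. y \<in> Q \<and> (\<forall>i. 0 \<le> u $ i)}"

definition zstar :: "(real^'n \<Rightarrow> real^'m) \<Rightarrow> (real^'n) set \<Rightarrow> 'm \<Rightarrow> real" where
  "zstar F C i = Inf ((\<lambda>x. F x $ i) ` C)"

definition phi :: "(real^'n \<Rightarrow> real^'m) \<Rightarrow> (real^'n) set \<Rightarrow> real^'m \<Rightarrow> real^'n \<Rightarrow> real" where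
  "phi F C r x = Max (range (\<lambda>i::'m. r $ i * (F x $ i - zstar F C i)))"

definition Hfun :: "(real^'n) set \<Rightarrow> real^'n \<Rightarrow> real" where
  "Hfun C x = (1/2) * (infdist x C)\<^sup>2"

definition Gfun :: "(real^'n \<Rightarrow> real^'m) \<Rightarrow> (real^'m) set \<Rightarrow> real^'n \<Rightarrow> real" where
  "Gfun F Q x = (1/2) * (infdist (F x) (Qplus Q))\<^sup>2"

definition feas :: "(real^'n \<Rightarrow> real^'m) \<Rightarrow> (real^'n) set \<Rightarrow> (real^'m) set \<Rightarrow> (real^'n) set" where
  "feas F C Q = {x. Hfun C x = 0 \<and> Gfun F Q x = 0}"

definition phistar :: "(real^'n \<Rightarrow> real^'m) \<Rightarrow> (real^'n) set \<Rightarrow> (real^'m) set \<Rightarrow> real^'m \<Rightarrow> real" where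
  "phistar F C Q r = Inf (phi F C r ` feas F C Q)"

definition Omega :: "(real^'n \<Rightarrow> real^'m) \<Rightarrow> (real^'n) set \<Rightarrow> (real^'m) set \<Rightarrow> real^'m \<Rightarrow> (real^'n) set" where
  "Omega F C Q r = {x \<in> feas F C Q. phi F C r x = phistar F C Q r}"

definition philb :: "(real^'n \<Rightarrow> real^'m) \<Rightarrow> (real^'n) set \<Rightarrow> real^'m \<Rightarrow> real" where
  "philb F C r = Inf (phi F C r ` C)"

end

theory Submission
  imports Defs
begin

(* Expanding the square of the step gives
   |x(k+1) - x*|^2 = |x(k) - x*|^2 - 2 (lam/eta) <d, x(k) - x*> + (lam/eta)^2 |d|^2,
   and |d| <= eta bounds the last term by lam^2.  The cross term is at least
   Phi - ahi sigma, by one first-order fact per component of d: convexity of f_{i*}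
   gives <w, x(k) - x*> >= Delta - sigma; the projection inequality for C gives
   <z, x(k) - x*> >= 2 H; the projection inequality for Q^+, the nonnegativity of
   the residual rho (Q^+ is closed under decreasing coordinates) and the convexity
   of every f_i give <v, x(k) - x*> >= 2 G.  Finally lam/eta <= lam/mu. *)

lemma nearest_point_dot_closure:
  fixes S :: "'a::real_inner set"
  assumes "convex S" "p \<in> S" "\<forall>z\<in>S. dist a p \<le> dist a z" "y \<in> closure S"
  shows "(a - p) \<bullet> (y - p) \<le> 0"
proof -
  have "closure S \<subseteq> {z. dist a p \<le> dist a z}"
    using assms(3) by (intro closure_minimal closed_Collect_le continuous_intros) auto
  then show ?thesis
    using any_closest_point_dot[OF convex_closure[OF assms(1)] closed_closure]
      closure_subset assms(2,4) by blast
qed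

lemma infdist_eq_dist_nearest:
  assumes "p \<in> A" "\<forall>y\<in>A. dist a p \<le> dist a y"
  shows "infdist a A = dist a p"
proof (rule antisym)
  show "infdist a A \<le> dist a p"
    using assms(1) by (rule infdist_le)
  have "A \<noteq> {}"
    using assms(1) by blast
  then show "dist a p \<le> infdist a A"
    unfolding infdist_notempty[OF \<open>A \<noteq> {}\<close>] using assms(2) by (intro cINF_greatest) auto
qed

lemma convex_on_above_tangent:
  fixes f :: "'a::real_normed_vector \<Rightarrow> real"
  assumes cvx: "convex_on UNIV f" and der: "(f has_derivative f') (at x)"
  shows "f' (y - x) \<le> f y - f x"
proof -
  define g where "g = (\<lambda>t::real. f (x + t *\<^sub>R (y - x)))"
  have "convex_on UNIV g"
  proof (rule convex_onI)
    fix t a b :: real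
    assume "0 < t" "t < 1"
    have "x + ((1 - t) *\<^sub>R a + t *\<^sub>R b) *\<^sub>R (y - x)
        = (1 - t) *\<^sub>R (x + a *\<^sub>R (y - x)) + t *\<^sub>R (x + b *\<^sub>R (y - x))"
      by (simp add: algebra_simps)
    then show "g ((1 - t) *\<^sub>R a + t *\<^sub>R b) \<le> (1 - t) * g a + t * g b"
      unfolding g_def using convex_onD[OF cvx, of t] \<open>0 < t\<close> \<open>t < 1\<close> by auto
  qed simp
  moreover have "(g has_field_derivative f' (y - x)) (at 0)"
  proof -
    have "((\<lambda>t::real. x + t *\<^sub>R (y - x)) has_derivative (\<lambda>t. t *\<^sub>R (y - x))) (at 0)"
      by (auto intro!: derivative_eq_intros)
    from diff_chain_at[OF this, of f f'] der
    have "(g has_derivative (\<lambda>t. f' (t *\<^sub>R (y - x)))) (at 0)"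
      by (simp add: g_def o_def)
    moreover have "(\<lambda>t. f' (t *\<^sub>R (y - x))) = (*) (f' (y - x))"
      using linear_scale[OF has_derivative_linear[OF der]] by (auto simp: mult.commute)
    ultimately show ?thesis
      by (simp add: has_field_derivative_def)
  qed
  ultimately have "f' (y - x) * (1 - 0) \<le> g 1 - g 0"
    by (intro convex_on_imp_above_tangent) auto
  then show ?thesis
    by (simp add: g_def)
qed

lemma convex_component_diff_le_derivative:
  fixes F :: "'a::real_normed_vector \<Rightarrow> real^'m"
  assumes "convex_on UNIV (\<lambda>y. F y $ i)" "(F has_derivative F') (at x)"
  shows "F x $ i - F y $ i \<le> F' (x - y) $ i"
proof -
  have "((\<lambda>y. F y $ i) has_derivative (\<lambda>h. F' h $ i)) (at x)"
    using bounded_linear.has_derivative[OF bounded_linear_vec_nth assms(2)] .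
  from convex_on_above_tangent[OF assms(1) this, of y]
  have "F' (y - x) $ i \<le> F y $ i - F x $ i" .
  moreover have "F' (y - x) = - F' (x - y)"
    using linear_diff[OF has_derivative_linear[OF assms(2)]] by (metis minus_diff_eq)
  ultimately show ?thesis
    by simp
qed

lemma inner_transpose_jacobian:
  fixes f :: "real^'n \<Rightarrow> 'b::real_inner"
  assumes "linear f"
  shows "(\<chi> j. y \<bullet> f (axis j 1)) \<bullet> h = y \<bullet> f h"
proof -
  have "f h = f (\<Sum>j\<in>UNIV. h $ j *\<^sub>R axis j 1)"
    using basis_expansion[of h] by (simp add: scalar_mult_eq_scaleR)
  also have "\<dots> = (\<Sum>j\<in>UNIV. h $ j *\<^sub>R f (axis j 1))"
    using assms by (simp add: linear_sum linear_scale)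
  finally show ?thesis
    by (simp add: inner_vec_def inner_sum_right mult.commute)
qed

lemma subset_Qplus: "Q \<subseteq> Qplus Q"
proof
  fix q assume "q \<in> Q"
  then have "q - 0 \<in> Qplus Q"
    unfolding Qplus_def by force
  then show "q \<in> Qplus Q"
    by simp
qed

lemma Qplus_diff_nonneg:
  assumes "p \<in> Qplus Q" "\<forall>i. 0 \<le> u $ i"
  shows "p - u \<in> Qplus Q"
proof -
  obtain q v where "p = q - v" "q \<in> Q" "\<forall>i. 0 \<le> v $ i"
    using assms(1) unfolding Qplus_def by blast
  moreover have "q - v - u = q - (v + u)"
    by simp
  ultimately show ?thesis
    using assms(2) unfolding Qplus_def by fastforce
qed

lemma convex_Qplus:
  assumes "convex Q"
  shows "convex (Qplus Q)"
  unfolding convex_def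
proof (intro ballI allI impI)
  fix a b :: "real^'a" and s t :: real
  assume "a \<in> Qplus Q" "b \<in> Qplus Q" and st: "0 \<le> s" "0 \<le> t" "s + t = 1"
  then obtain qa ua qb ub where a: "a = qa - ua" "qa \<in> Q" "\<forall>i. 0 \<le> ua $ i"
    and b: "b = qb - ub" "qb \<in> Q" "\<forall>i. 0 \<le> ub $ i"
    unfolding Qplus_def by blast
  have "s *\<^sub>R a + t *\<^sub>R b = (s *\<^sub>R qa + t *\<^sub>R qb) - (s *\<^sub>R ua + t *\<^sub>R ub)"
    unfolding a(1) b(1) by (simp add: algebra_simps)
  moreover have "s *\<^sub>R qa + t *\<^sub>R qb \<in> Q"
    using assms a b st unfolding convex_def by blast
  moreover have "\<forall>i. 0 \<le> (s *\<^sub>R ua + t *\<^sub>R ub) $ i"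
    using a b st by simp
  ultimately show "s *\<^sub>R a + t *\<^sub>R b \<in> Qplus Q"
    unfolding Qplus_def by blast
qed

lemma nearest_Qplus_residual_nonneg:
  assumes "convex Q" "p \<in> Qplus Q" "\<forall>y\<in>Qplus Q. dist a p \<le> dist a y"
  shows "0 \<le> (a - p) $ i"
proof -
  have "p - axis i 1 \<in> Qplus Q"
    using Qplus_diff_nonneg[OF assms(2)] by (simp add: axis_def)
  then have "(a - p) \<bullet> (p - axis i 1 - p) \<le> 0"
    using nearest_point_dot_closure[OF convex_Qplus[OF assms(1)] assms(2,3)] closure_subset
    by blast
  then show ?thesis
    by (simp add: inner_axis)
qed

text \<open>\<open>Qplus Q\<close> need not be closed, so feasibility only puts \<open>F x\<close> into its closure.\<close>

lemma feas_eq: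
  assumes "closed C" "C \<noteq> {}" "Q \<noteq> {}"
  shows "feas F C Q = {x \<in> C. F x \<in> closure (Qplus Q)}"
proof -
  have "Qplus Q \<noteq> {}"
    using assms(3) subset_Qplus by blast
  then show ?thesis
    unfolding feas_def Hfun_def Gfun_def
    using in_closed_iff_infdist_zero[OF assms(1,2)] in_closure_iff_infdist_zero by auto
qed

lemma phi_eq_argmax:
  assumes "\<forall>i. r $ i * (F x $ i - zstar F C i) \<le> r $ j * (F x $ j - zstar F C j)"
  shows "phi F C r x = r $ j * (F x $ j - zstar F C j)"
  unfolding phi_def using assms by (intro Max_eqI) auto

lemma phi_ge: "r $ i * (F x $ i - zstar F C i) \<le> phi F C r x"
  unfolding phi_def by (intro Max_ge) auto

lemma philb_le_phistar:
  fixes F :: "real^'n \<Rightarrow> real^'m"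
  assumes "\<forall>i. r $ i > 0" "\<forall>i. bdd_below ((\<lambda>y. F y $ i) ` C)"
    and "feas F C Q \<noteq> {}" "feas F C Q \<subseteq> C"
  shows "philb F C r \<le> phistar F C Q r"
proof -
  have "0 \<le> phi F C r y" if "y \<in> C" for y
  proof -
    have "zstar F C i \<le> F y $ i" for i
      unfolding zstar_def using that assms(2) by (intro cInf_lower) auto
    then have "0 \<le> r $ i * (F y $ i - zstar F C i)" for i
      using assms(1) by (simp add: less_imp_le)
    then show ?thesis
      using order_trans[OF _ phi_ge] by blast
  qed
  then show ?thesis
    unfolding phistar_def philb_def using assms(3,4)
    by (intro cInf_superset_mono) (auto intro!: bdd_belowI[where m=0])
qed

lemma phi_diff_le_derivative:
  fixes F :: "real^'n \<Rightarrow> real^'m"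
  assumes "\<forall>i. r $ i > 0" "\<forall>i. convex_on UNIV (\<lambda>y. F y $ i)" "(F has_derivative F') (at x)"
    and "\<forall>i. r $ i * (F x $ i - zstar F C i) \<le> r $ j * (F x $ j - zstar F C j)"
  shows "phi F C r x - phi F C r y \<le> r $ j * F' (x - y) $ j"
proof -
  have "r $ j * (F x $ j - F y $ j) \<le> r $ j * F' (x - y) $ j"
    using convex_component_diff_le_derivative[OF assms(2)[rule_format] assms(3)] assms(1)
    by (simp add: less_imp_le)
  then show ?thesis
    using phi_eq_argmax[OF assms(4)] phi_ge[of r j F y C] by (simp add: algebra_simps)
qed

lemma Hfun_le_inner_closest_point:
  assumes "closed C" "convex C" "y \<in> C"
  shows "2 * Hfun C x \<le> (x - closest_point C x) \<bullet> (x - y)"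
proof -
  let ?c = "closest_point C x"
  have "infdist x C = dist x ?c"
    using closest_point_exists[OF assms(1)] assms(3) by (intro infdist_eq_dist_nearest) auto
  then have "2 * Hfun C x = (x - ?c) \<bullet> (x - ?c)"
    unfolding Hfun_def by (simp add: dist_norm power2_norm_eq_inner)
  moreover have "(x - ?c) \<bullet> (y - ?c) \<le> 0"
    using closest_point_dot[OF assms(2,1,3)] .
  moreover have "(x - ?c) \<bullet> (x - y) = (x - ?c) \<bullet> (x - ?c) - (x - ?c) \<bullet> (y - ?c)"
    by (simp add: algebra_simps inner_diff_right)
  ultimately show ?thesis
    by linarith
qed

lemma Gfun_le_inner_residual_derivative:
  fixes F :: "real^'n \<Rightarrow> real^'m"
  assumes "convex Q" "p \<in> Qplus Q" "\<forall>y\<in>Qplus Q. dist (F x) p \<le> dist (F x) y"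
    and "F y \<in> closure (Qplus Q)"
    and "\<forall>i. convex_on UNIV (\<lambda>y. F y $ i)" "(F has_derivative F') (at x)"
  shows "2 * Gfun F Q x \<le> (F x - p) \<bullet> F' (x - y)"
proof -
  let ?\<rho> = "F x - p"
  have "2 * Gfun F Q x = ?\<rho> \<bullet> ?\<rho>"
    using infdist_eq_dist_nearest[OF assms(2,3)]
    unfolding Gfun_def by (simp add: dist_norm power2_norm_eq_inner)
  moreover have "?\<rho> \<bullet> (F y - p) \<le> 0"
    using nearest_point_dot_closure[OF convex_Qplus[OF assms(1)] assms(2,3,4)] .
  moreover have "?\<rho> \<bullet> (F x - F y) \<le> ?\<rho> \<bullet> F' (x - y)"
    unfolding inner_vec_def
    using nearest_Qplus_residual_nonneg[OF assms(1-3)]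
      convex_component_diff_le_derivative[OF assms(5)[rule_format] assms(6)]
    by (intro sum_mono) (auto intro!: mult_left_mono)
  moreover have "?\<rho> \<bullet> (F x - F y) = ?\<rho> \<bullet> ?\<rho> - ?\<rho> \<bullet> (F y - p)"
    by (simp add: algebra_simps inner_diff_right)
  ultimately show ?thesis
    by linarith
qed

lemma inner_direction_lower_bound:
  fixes w z v h :: "'a::real_inner"
  assumes "0 \<le> a" "a \<le> ahi" "0 \<le> b" "0 \<le> g" "0 \<le> \<sigma>" "0 \<le> H" "0 \<le> G"
    and "\<Delta> - \<sigma> \<le> w \<bullet> h" "2 * H \<le> z \<bullet> h" "2 * G \<le> v \<bullet> h"
  shows "a * max \<Delta> 0 + b * H + g * G - ahi * \<sigma>
    \<le> ((if \<Delta> \<ge> 0 then a else 0) *\<^sub>R w + b *\<^sub>R z + g *\<^sub>R v) \<bullet> h"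
proof -
  have "b * H \<le> b * (z \<bullet> h)" "g * G \<le> g * (v \<bullet> h)"
    using assms by (auto intro: mult_left_mono)
  moreover have "a * max \<Delta> 0 - ahi * \<sigma> \<le> (if \<Delta> \<ge> 0 then a else 0) * (w \<bullet> h)"
  proof (cases "\<Delta> \<ge> 0")
    case True
    have "a * (\<Delta> - \<sigma>) \<le> a * (w \<bullet> h)" "a * \<sigma> \<le> ahi * \<sigma>"
      using assms by (auto intro: mult_left_mono mult_right_mono)
    then show ?thesis
      using True by (simp add: algebra_simps)
  qed (use assms in auto)
  ultimately show ?thesis
    by (simp add: inner_add_left)
qed

lemma step_norm_sq_le:
  fixes x y d :: "'a::real_inner"
  assumes "0 < \<mu>" "\<mu> \<le> \<eta>" "norm d \<le> \<eta>" "0 < lam" "0 \<le> c" "\<Phi> - c \<le> d \<bullet> (x - y)"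
  shows "(norm (x - (lam / \<eta>) *\<^sub>R d - y))\<^sup>2
    \<le> (norm (x - y))\<^sup>2 - 2 * lam / \<eta> * \<Phi> + 2 * c / \<mu> * lam + lam\<^sup>2"
proof -
  define t where "t = lam / \<eta>"
  have t: "0 < t" "t * \<eta> = lam"
    using assms(1,2,4) by (auto simp: t_def)
  have "(norm (x - t *\<^sub>R d - y))\<^sup>2
      = (norm (x - y))\<^sup>2 - 2 * t * (d \<bullet> (x - y)) + t\<^sup>2 * (norm d)\<^sup>2"
    unfolding power2_norm_eq_inner
    by (simp add: inner_diff_left inner_diff_right inner_commute power2_eq_square algebra_simps)
  moreover have "t\<^sup>2 * (norm d)\<^sup>2 \<le> lam\<^sup>2"
  proof -
    have "t * norm d \<le> t * \<eta>"
      using t assms(3) by (intro mult_left_mono) auto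
    then show ?thesis
      using t by (metis power_mono power_mult_distrib norm_ge_zero mult_nonneg_nonneg less_imp_le)
  qed
  moreover have "t * \<Phi> - t * c \<le> t * (d \<bullet> (x - y))"
    using mult_left_mono[OF assms(6), of t] t by (simp add: right_diff_distrib)
  moreover have "t * c \<le> c / \<mu> * lam"
    using t assms(1,2,5) by (simp add: t_def divide_simps mult_left_mono mult_right_mono)
  moreover have "2 * lam / \<eta> * \<Phi> = 2 * (t * \<Phi>)" "2 * c / \<mu> * lam = 2 * (c / \<mu> * lam)"
    by (simp_all add: t_def)
  ultimately show ?thesis
    unfolding t_def[symmetric] by linarith
qed


theorem lemma16:
  fixes F :: "real^'n \<Rightarrow> real^'m"
    and F' :: "real^'n \<Rightarrow> ((real^'n) \<Rightarrow>\<^sub>L (real^'m))"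
    and C :: "(real^'n) set" and Q :: "(real^'m) set"
    and r :: "real^'m"
    and \<mu> :: real
    and \<alpha> \<beta> \<gamma> lam :: "nat \<Rightarrow> real"
    and alo ahi blo bhi glo ghi eps0 B :: real
    and x :: "nat \<Rightarrow> real^'n" and p :: "nat \<Rightarrow> real^'m" and \<rho> :: "nat \<Rightarrow> real^'m"
    and z v w d :: "nat \<Rightarrow> real^'n" and istar :: "nat \<Rightarrow> 'm"
    and \<Delta> \<eta> :: "nat \<Rightarrow> real"
  assumes r_pos: "\<forall>i. r $ i > 0" and r_sum: "(\<Sum>i\<in>UNIV. r $ i) = 1"
    \<comment> \<open>(A1)\<close>
    and A1_deriv: "\<forall>y. (F has_derivative blinfun_apply (F' y)) (at y)"
    and A1_cont: "continuous_on UNIV F'"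
    \<comment> \<open>(A2)\<close>
    and A2_C: "C \<noteq> {}" "closed C" "convex C"
    and A2_Q: "Q \<noteq> {}" "closed Q" "convex Q"
    and A2_z: "\<forall>i. bdd_below ((\<lambda>y. F y $ i) ` C)"
    \<comment> \<open>(A3)\<close>
    and A3: "\<forall>i. convex_on UNIV (\<lambda>y. F y $ i)"
    \<comment> \<open>(A4)\<close>
    and A4: "Omega F C Q r \<noteq> {}"
    \<comment> \<open>(A5)\<close>
    and A5_pos: "\<forall>k. lam k > 0"
    and A5_div: "\<not> summable lam"
    and A5_sq: "summable (\<lambda>k. (lam k)\<^sup>2)"
    \<comment> \<open>(A6)\<close>
    and A6_a: "0 < alo" "\<forall>k. alo \<le> \<alpha> k \<and> \<alpha> k \<le> ahi"
    and A6_b: "0 < blo" "\<forall>k. blo \<le> \<beta> k \<and> \<beta> k \<le> bhi"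
    and A6_g: "0 < glo" "\<forall>k. glo \<le> \<gamma> k \<and> \<gamma> k \<le> ghi"
    \<comment> \<open>(A7')\<close>
    and A7: "0 \<le> eps0" "phistar F C Q r - philb F C r \<le> eps0"
    \<comment> \<open>(A8)\<close>
    and A8: "\<forall>k. norm (x k) \<le> B"
    \<comment> \<open>ABP algorithm\<close>
    and mu_pos: "\<mu> > 0"
    and ABP_p: "\<forall>k. p k \<in> Qplus Q \<and> (\<forall>y\<in>Qplus Q. dist (F (x k)) (p k) \<le> dist (F (x k)) y)"
    and ABP_rho: "\<forall>k. \<rho> k = F (x k) - p k"
    and ABP_z: "\<forall>k. z k = x k - closest_point C (x k)"
    and ABP_v: "\<forall>k. v k = (\<chi> j. \<rho> k \<bullet> blinfun_apply (F' (x k)) (axis j 1))"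
    and ABP_istar: "\<forall>k. \<forall>i. r $ i * (F (x k) $ i - zstar F C i)
                     \<le> r $ istar k * (F (x k) $ istar k - zstar F C (istar k))"
    and ABP_w: "\<forall>k. w k = r $ istar k *\<^sub>R (\<chi> j. blinfun_apply (F' (x k)) (axis j 1) $ istar k)"
    and ABP_Delta: "\<forall>k. \<Delta> k = phi F C r (x k) - philb F C r"
    and ABP_d: "\<forall>k. d k = (if \<Delta> k \<ge> 0 then \<alpha> k else 0) *\<^sub>R w k + \<beta> k *\<^sub>R z k + \<gamma> k *\<^sub>R v k"
    and ABP_eta: "\<forall>k. \<eta> k = max \<mu> (norm (d k))"
    and ABP_x: "\<forall>k. x (Suc k) = x k - (lam k / \<eta> k) *\<^sub>R d k"
  shows "\<forall>xs\<in>Omega F C Q r. \<forall>k.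
     (norm (x (Suc k) - xs))\<^sup>2 \<le> (norm (x k - xs))\<^sup>2
       - 2 * lam k / \<eta> k * (\<alpha> k * max (\<Delta> k) 0 + \<beta> k * Hfun C (x k) + \<gamma> k * Gfun F Q (x k))
       + 2 * ahi * (phistar F C Q r - philb F C r) / \<mu> * lam k + (lam k)\<^sup>2"
proof (intro ballI allI)
  fix xs k
  assume "xs \<in> Omega F C Q r"
  then have xs: "xs \<in> C" "F xs \<in> closure (Qplus Q)" "phi F C r xs = phistar F C Q r"
    and "xs \<in> feas F C Q"
    unfolding Omega_def feas_eq[OF A2_C(2,1) A2_Q(1)] by auto
  let ?L = "blinfun_apply (F' (x k))" and ?h = "x k - xs"
    and ?\<sigma> = "phistar F C Q r - philb F C r"
  have lin: "linear ?L"
    by (simp add: blinfun.bounded_linear_right bounded_linear.linear)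
  have \<sigma>: "0 \<le> ?\<sigma>"
    using philb_le_phistar[OF r_pos A2_z, of Q] \<open>xs \<in> feas F C Q\<close>
      feas_eq[OF A2_C(2,1) A2_Q(1)] by auto
  have w: "\<Delta> k - ?\<sigma> \<le> w k \<bullet> ?h"
  proof -
    have "w k \<bullet> ?h = r $ istar k * ?L ?h $ istar k"
      using inner_transpose_jacobian[OF lin, of "axis (istar k) 1"] ABP_w
      by (simp add: cart_eq_inner_axis inner_commute)
    then show ?thesis
      using phi_diff_le_derivative[OF r_pos A3 A1_deriv[rule_format] spec[OF ABP_istar, of k], of xs]
        ABP_Delta xs(3) by simp
  qed
  have z: "2 * Hfun C (x k) \<le> z k \<bullet> ?h"
    using Hfun_le_inner_closest_point[OF A2_C(2,3) xs(1)] ABP_z by simp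
  have v: "2 * Gfun F Q (x k) \<le> v k \<bullet> ?h"
    using Gfun_le_inner_residual_derivative[OF A2_Q(3) _ _ xs(2) A3 A1_deriv[rule_format]]
      ABP_p inner_transpose_jacobian[OF lin] ABP_v ABP_rho by simp
  have weights: "0 \<le> \<alpha> k" "\<alpha> k \<le> ahi" "0 \<le> \<beta> k" "0 \<le> \<gamma> k"
    using A6_a A6_b A6_g by (meson less_imp_le order_trans)+
  have "0 \<le> Hfun C (x k)" "0 \<le> Gfun F Q (x k)"
    by (simp_all add: Hfun_def Gfun_def)
  with inner_direction_lower_bound[OF weights \<sigma> _ _ w z v] ABP_d
  have cross: "\<alpha> k * max (\<Delta> k) 0 + \<beta> k * Hfun C (x k) + \<gamma> k * Gfun F Q (x k) - ahi * ?\<sigma>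
      \<le> d k \<bullet> ?h"
    by simp
  show "(norm (x (Suc k) - xs))\<^sup>2 \<le> (norm (x k - xs))\<^sup>2
       - 2 * lam k / \<eta> k * (\<alpha> k * max (\<Delta> k) 0 + \<beta> k * Hfun C (x k) + \<gamma> k * Gfun F Q (x k))
       + 2 * ahi * ?\<sigma> / \<mu> * lam k + (lam k)\<^sup>2"
    using step_norm_sq_le[OF mu_pos _ _ spec[OF A5_pos, of k] mult_nonneg_nonneg[OF _ \<sigma>] cross]
      ABP_eta ABP_x weights by (simp add: mult.assoc)
qed

end
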